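(* Let $\tilde A\in\widetilde{SL}(2,\mathbb R)$, let $a\in\mathbb R$, let $b:=\tilde A(a)$, so that $I:=[a,b)$ is a fundamental domain of $\mathbb R/\langle\tilde A\rangle$, and let $W(I)$ denote the winding number of $(a,b)$. Then: (1) if $\tilde A$ is conjugate to $\tilde E_\alpha$ with $\alpha>0$, then $W(I)=n$ if and only if $\alpha=n\pi$, and otherwise $W(I)=n+\frac12$, where $n\pi<\alpha<(n+1)\pi$; (2) if $\tilde A$ is conjugate to $\tilde P^+_n$, respectively $\tilde P^-_n$, with $n\in\mathbb N^*$, then $n-\frac12\le W(I)\le n$, respectively $n\le W(I)\le n+\frac12$; (3) if $\tilde A$ is conjugate to $\tilde H_n(\lambda)$ with $\lambda>1$ and $n\in\mathbb N^*$, then $n-\frac12\le W(I)\le n+\frac12$. In cases (2) and (3), $W(I)$ is an integer if and only if $\pi(a)\in\mathbb{RP}^1$ is a fixed point of the projection $\hat A\in PSL(2,\mathbb R)$ of $\tilde A$. Moreover, the bounds in the inequalities above are attained (for suitable $a$).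
   Context: Let $\pi:\mathbb R\to\mathbb{RP}^1$, $\pi(t)=[\cos t:\sin t]$, $\bar\pi(t)=(\cos t,\sin t)\in S^1$; $SL(2,\mathbb R)$ acts on $S^1$ by $A\cdot v=Av/\|Av\|$ and $PSL(2,\mathbb R)$ on $\mathbb{RP}^1$ by homographies. $\widetilde{SL}(2,\mathbb R)$ is the group of diffeomorphisms $\tilde A$ of $\mathbb R$ with $\bar\pi\circ\tilde A=A\cdot\bar\pi$ for some $A\in SL(2,\mathbb R)$; its projection $\hat A\in PSL(2,\mathbb R)$ is the class of $A$, and $\pi\circ\tilde A=\hat A\circ\pi$. $\tilde E_\alpha(x)=x+\alpha$. For $\hat A\in PSL(2,\mathbb R)$ with a fixed point in $\mathbb{RP}^1$, its canonical lift $\tilde A_0$ is the unique lift having a fixed point in $\mathbb R$. With $P^\pm=\begin{pmatrix}1&\pm1\\0&1\end{pmatrix}$ and $H(\lambda)=\begin{pmatrix}\lambda&0\\0&\lambda^{-1}\end{pmatrix}$ ($\lambda>0$, $\lambda\ne1$), let $\tilde P^\pm_0$, $\tilde H_0(\lambda)$ be the canonical lifts of their classes and $\tilde P^\pm_n:=\tilde P^\pm_0\tilde E_{n\pi}$, $\tilde H_n(\lambda):=\tilde H_0(\lambda)\tilde E_{n\pi}$. Conjugacy is in $\widetilde{SL}(2,\mathbb R)$. Winding number: for $a<b$, $W((a,b))=k$ if $b=a+k\pi$, $k\in\mathbb N$, and $W((a,b))=k+\frac12$ if $a+k\pi<b<a+(k+1)\pi$, $k\in\mathbb N$. *)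

theory Defs
  imports "HOL-Analysis.Analysis"
begin

type_synonym mat2 = "real^2^2"

definition pibar :: "real \<Rightarrow> real^2" where
  "pibar t = vector [cos t, sin t]"

definition sl_act :: "mat2 \<Rightarrow> real^2 \<Rightarrow> real^2" where
  "sl_act M v = (1 / norm (M *v v)) *\<^sub>R (M *v v)"

definition diffeo :: "(real \<Rightarrow> real) \<Rightarrow> bool" where
  "diffeo g \<longleftrightarrow> bij g \<and> (\<forall>x. g differentiable (at x)) \<and> (\<forall>x. inv g differentiable (at x))"

definition lift_of :: "mat2 \<Rightarrow> (real \<Rightarrow> real) \<Rightarrow> bool" where
  "lift_of M g \<longleftrightarrow> det M = 1 \<and> (\<forall>t. pibar (g t) = sl_act M (pibar t))"

definition SLtilde :: "(real \<Rightarrow> real) set" where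
  "SLtilde = {g. diffeo g \<and> (\<exists>M. lift_of M g)}"

definition conjugate :: "(real \<Rightarrow> real) \<Rightarrow> (real \<Rightarrow> real) \<Rightarrow> bool" where
  "conjugate f h \<longleftrightarrow> (\<exists>g\<in>SLtilde. f = g \<circ> h \<circ> inv g)"

definition Etr :: "real \<Rightarrow> real \<Rightarrow> real" where
  "Etr \<alpha> x = x + \<alpha>"

text \<open>g is the canonical lift of the class of M in PSL(2,R): an element of
  the universal cover projecting to the class of M (i.e. lifting M or -M)
  and having a fixed point in R.\<close>
definition canonical_lift :: "mat2 \<Rightarrow> (real \<Rightarrow> real) \<Rightarrow> bool" where
  "canonical_lift M g \<longleftrightarrow> g \<in> SLtilde \<and> (lift_of M g \<or> lift_of (- M) g) \<and> (\<exists>x. g x = x)"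

definition Pplus :: mat2 where "Pplus = vector [vector [1, 1], vector [0, 1]]"
definition Pminus :: mat2 where "Pminus = vector [vector [1, -1], vector [0, 1]]"
definition Hmat :: "real \<Rightarrow> mat2" where "Hmat l = vector [vector [l, 0], vector [0, 1 / l]]"

definition rp_fixed :: "mat2 \<Rightarrow> real \<Rightarrow> bool" where
  "rp_fixed M t \<longleftrightarrow> (\<exists>c::real. M *v pibar t = c *\<^sub>R pibar t)"

definition winding :: "real \<Rightarrow> real \<Rightarrow> real" where
  "winding a b = (if \<exists>k::nat. b = a + real k * pi
     then real (THE k::nat. b = a + real k * pi)
     else real (THE k::nat. a + real k * pi < b \<and> b < a + real (k + 1) * pi) + 1/2)"

end

(*
  A lift g of A in SL(2,R) commutes with the translation by pi and maps every interval (t, t + pi)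
  into (g t, g t + pi), because sin (g s - g t) is a positive multiple of sin (s - t). Hence g is
  increasing and preserves winding numbers, so after conjugating, a |-> W(a, f a) has the same range
  as x |-> W(x, G x) for the model G. For G = E_alpha this is constant. For G = g o E_(n pi) with g a
  canonical lift, g has a fixed point, hence |g x - x| < pi and W(x, G x) = n + sgn (g x - x) / 2.
  The sign of g x - x is that of sin (g x - x), a positive multiple of det (pibar x, M pibar x),
  which equals -sin^2 x, sin^2 x and (1/lambda - lambda) sin x cos x for P+, P- and H(lambda);
  positive trace excludes that g lifts -M instead of M.  The same determinant vanishes exactly
  when pi(x) is fixed by the homography, which gives the integrality criterion.
*)
theory Submission
  imports Defs
begin

lemma sgn_sin:
  fixes x :: real
  assumes "\<bar>x\<bar> < pi"
  shows "sgn (sin x) = sgn x"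
proof -
  have "sin x > 0" if "0 < x" "x < pi" for x :: real using that by (rule sin_gt_zero)
  from this[of x] this[of "- x"] assms show ?thesis
    by (cases x "0 :: real" rule: linorder_cases) (auto simp: sgn_real_def)
qed

lemma pibar_nth [simp]: "pibar t $ 1 = cos t" "pibar t $ 2 = sin t"
  by (simp_all add: pibar_def)

lemma norm_pibar [simp]: "norm (pibar t) = 1"
  by (simp add: norm_vec_def L2_set_def sum_2)

lemma matrix_vector_mult_2:
  fixes M :: mat2
  shows "(M *v v) $ 1 = M$1$1 * v$1 + M$1$2 * v$2" "(M *v v) $ 2 = M$2$1 * v$1 + M$2$2 * v$2"
  by (simp_all add: matrix_vector_mult_def sum_2)

text \<open>The determinant of \<open>(pibar t, M *v pibar t)\<close>, measuring how far \<open>\<pi>(t)\<close> is from being fixed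
  by the homography of \<open>M\<close>.\<close>
definition fix_defect :: "mat2 \<Rightarrow> real \<Rightarrow> real" where
  "fix_defect M t = cos t * (M *v pibar t) $ 2 - sin t * (M *v pibar t) $ 1"

lemma pibar_parallel_iff:
  "(\<exists>c. w = c *\<^sub>R pibar t) \<longleftrightarrow> cos t * w $ 2 - sin t * w $ 1 = 0"
proof
  assume "cos t * w $ 2 - sin t * w $ 1 = 0"
  \<comment> \<open>the coefficient is the orthogonal projection of \<open>w\<close> onto \<open>pibar t\<close>\<close>
  then have "(cos t * w $ 1 + sin t * w $ 2) * cos t = w $ 1"
    "(cos t * w $ 1 + sin t * w $ 2) * sin t = w $ 2"
    using sin_cos_squared_add[of t] by algebra+
  then have "w = (cos t * w $ 1 + sin t * w $ 2) *\<^sub>R pibar t"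
    by (simp add: vec_eq_iff forall_2)
  then show "\<exists>c. w = c *\<^sub>R pibar t" ..
qed (auto simp: algebra_simps)

lemma rp_fixed_iff_fix_defect: "rp_fixed M t \<longleftrightarrow> fix_defect M t = 0"
  by (simp add: rp_fixed_def fix_defect_def pibar_parallel_iff)

section \<open>Lifts of \<open>SL(2,\<real>)\<close> acting on the line\<close>

lemma lift_of_polar:
  assumes "lift_of M g"
  shows "norm (M *v pibar t) > 0" "M *v pibar t = norm (M *v pibar t) *\<^sub>R pibar (g t)"
proof -
  have "inj ((*v) M)"
    using assms by (intro inj_matrix_vector_mult) (simp add: lift_of_def invertible_det_nz)
  then have "M *v pibar t \<noteq> 0"
    by (metis matrix_vector_mult_0_right norm_pibar norm_zero injD zero_neq_one)
  then show "norm (M *v pibar t) > 0" by simp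
  then show "M *v pibar t = norm (M *v pibar t) *\<^sub>R pibar (g t)"
    using assms by (simp add: lift_of_def sl_act_def)
qed

lemma lift_of_sin_diff:
  assumes "lift_of M g"
  shows "sin (g s - g t) = sin (s - t) / (norm (M *v pibar s) * norm (M *v pibar t))"
proof -
  let ?r = "\<lambda>u. norm (M *v pibar u)"
  have r: "?r s > 0" "?r t > 0" using lift_of_polar(1)[OF assms] by auto
  have c: "(M *v pibar u) $ i = ?r u * pibar (g u) $ i" for u i
    using arg_cong[OF lift_of_polar(2)[OF assms, of u], of "\<lambda>v. v $ i"] by simp
  have d: "M$1$1 * M$2$2 - M$1$2 * M$2$1 = 1" using assms by (simp add: lift_of_def det_2)
  have "?r s * ?r t * sin (g s - g t)
      = (M *v pibar s) $ 2 * (M *v pibar t) $ 1 - (M *v pibar s) $ 1 * (M *v pibar t) $ 2"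
    by (simp add: c sin_diff algebra_simps)
  also have "\<dots> = (M$1$1 * M$2$2 - M$1$2 * M$2$1) * sin (s - t)"
    by (simp add: matrix_vector_mult_2 sin_diff algebra_simps)
  finally show ?thesis using r d by (simp add: field_simps)
qed

lemma lift_of_sin_displacement:
  assumes "lift_of M g"
  shows "sin (g t - t) = fix_defect M t / norm (M *v pibar t)"
proof -
  have c: "(M *v pibar t) $ i = norm (M *v pibar t) * pibar (g t) $ i" for i
    using arg_cong[OF lift_of_polar(2)[OF assms, of t], of "\<lambda>v. v $ i"] by simp
  have "norm (M *v pibar t) * sin (g t - t) = fix_defect M t"
    by (simp add: fix_defect_def c sin_diff algebra_simps)
  then show ?thesis using lift_of_polar(1)[OF assms, of t] by (simp add: field_simps)
qed

lemma lift_of_antipodal: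
  assumes "lift_of M g"
  shows "cos (g (t + pi) - g t) = -1"
proof -
  have "pibar (t + pi) = - pibar t" by (simp add: vec_eq_iff forall_2)
  then have "M *v pibar (t + pi) = - (M *v pibar t)" by (simp add: vec.neg)
  then have "norm (M *v pibar t) *\<^sub>R pibar (g (t + pi)) = norm (M *v pibar t) *\<^sub>R (- pibar (g t))"
    using lift_of_polar(2)[OF assms, of t] lift_of_polar(2)[OF assms, of "t + pi"] by simp
  then have "pibar (g (t + pi)) = - pibar (g t)"
    using lift_of_polar(1)[OF assms, of t] by (metis less_irrefl scaleR_cancel_left)
  then have "cos (g (t + pi)) = - cos (g t) \<and> sin (g (t + pi)) = - sin (g t)"
    by (simp add: vec_eq_iff forall_2)
  then have "cos (g (t + pi) - g t) = - ((sin (g t))\<^sup>2 + (cos (g t))\<^sup>2)"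
    by (simp add: cos_diff power2_eq_square)
  then show ?thesis by simp
qed

lemma SLtilde_lift_of:
  assumes "g \<in> SLtilde"
  obtains M where "lift_of M g"
  using assms by (auto simp: SLtilde_def)

lemma SLtilde_continuous_on:
  assumes "g \<in> SLtilde"
  shows "continuous_on S g"
  using assms differentiable_imp_continuous_within
  by (auto simp: SLtilde_def diffeo_def intro!: continuous_at_imp_continuous_on)

lemma SLtilde_less_within_pi:
  assumes g: "g \<in> SLtilde" and ts: "t < s" "s < t + pi"
  shows "g t < g s \<and> g s < g t + pi"
proof -
  obtain M where L: "lift_of M g" using g by (rule SLtilde_lift_of)
  have cont: "continuous_on {t..s} g" using g by (rule SLtilde_continuous_on)
  have sin_pos: "sin (g u - g t) > 0" if "t < u" "u \<le> s" for u
    using that ts lift_of_polar(1)[OF L] by (simp add: lift_of_sin_diff[OF L] sin_gt_zero)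
  \<comment> \<open>By the intermediate value theorem, \<open>g s - g t\<close> cannot leave \<open>(-\<pi>, \<pi>)\<close> without
     passing through \<open>\<plusminus>\<pi>\<close>, where the sine vanishes.\<close>
  have upper: "g s < g t + pi"
  proof (rule ccontr)
    assume "\<not> g s < g t + pi"
    then obtain u where "t \<le> u" "u \<le> s" "g u = g t + pi"
      using IVT'[of g t "g t + pi" s] cont ts by auto
    then show False using sin_pos[of u] by (cases "u = t") auto
  qed
  have lower: "g t - pi < g s"
  proof (rule ccontr)
    assume "\<not> g t - pi < g s"
    then obtain u where "t \<le> u" "u \<le> s" "g u = g t - pi"
      using IVT2'[of g s "g t - pi" t] cont ts by auto
    then show False using sin_pos[of u] by (cases "u = t") auto
  qed
  have "sgn (g s - g t) = sgn (sin (g s - g t))"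
    using upper lower by (intro sgn_sin[symmetric]) (simp add: abs_less_iff)
  then have "g s - g t > 0" using sin_pos[of s] ts by (simp add: sgn_1_pos)
  then show ?thesis using upper by simp
qed

lemma SLtilde_shift_pi:
  assumes g: "g \<in> SLtilde"
  shows "g (t + pi) = g t + pi"
proof -
  obtain M where L: "lift_of M g" using g by (rule SLtilde_lift_of)
  obtain m :: int where m: "g (t + pi) - g t = (2 * of_int m + 1) * pi"
    using lift_of_antipodal[OF L, of t] cos_eq_minus1 by blast
  have "g t < g (t + pi/2)" "g (t + pi/2) < g t + pi"
    using SLtilde_less_within_pi[OF g, of t "t + pi/2"] by auto
  moreover have "g (t + pi/2) < g (t + pi)" "g (t + pi) < g (t + pi/2) + pi"
    using SLtilde_less_within_pi[OF g, of "t + pi/2" "t + pi"] by auto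
  ultimately have "0 * pi < (2 * of_int m + 1) * pi" "(2 * of_int m + 1) * pi < 2 * pi"
    using m by linarith+
  then have "0 < 2 * m + 1" "2 * m + 1 < 2"
    unfolding mult_less_cancel_right using pi_gt_zero by linarith+
  then have "m = 0" by linarith
  then show ?thesis using m by simp
qed

lemma SLtilde_shift_nat:
  assumes "g \<in> SLtilde"
  shows "g (t + real k * pi) = g t + real k * pi"
proof (induction k)
  case (Suc k)
  have "g (t + real (Suc k) * pi) = g ((t + real k * pi) + pi)" by (simp add: algebra_simps)
  also have "\<dots> = g (t + real k * pi) + pi" by (rule SLtilde_shift_pi[OF assms])
  also have "\<dots> = g t + real (Suc k) * pi" using Suc by (simp add: algebra_simps)
  finally show ?case .
qed simp

lemma SLtilde_shift_int:
  assumes "g \<in> SLtilde"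
  shows "g (t + of_int k * pi) = g t + of_int k * pi"
proof (cases "k \<ge> 0")
  case True
  then show ?thesis using SLtilde_shift_nat[OF assms, of t "nat k"] by simp
next
  case False
  have "g t = g ((t + of_int k * pi) + real (nat (- k)) * pi)" using False by simp
  also have "\<dots> = g (t + of_int k * pi) + real (nat (- k)) * pi"
    by (rule SLtilde_shift_nat[OF assms])
  finally show ?thesis using False by simp
qed

lemma SLtilde_between:
  assumes "g \<in> SLtilde" "t + real k * pi < s" "s < t + real (k + 1) * pi"
  shows "g t + real k * pi < g s \<and> g s < g t + real (k + 1) * pi"
  using SLtilde_less_within_pi[OF assms(1), of "t + real k * pi" s] assms
    SLtilde_shift_nat[OF assms(1), of t k]
  by (simp add: algebra_simps)

lemma floor_divide_pi_bounds:
  fixes d :: real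
  shows "of_int \<lfloor>d / pi\<rfloor> * pi \<le> d" "d < (of_int \<lfloor>d / pi\<rfloor> + 1) * pi"
  by (metis of_int_floor_le pos_le_divide_eq pi_gt_zero)
    (metis real_of_int_floor_add_one_gt pos_divide_less_eq pi_gt_zero)

lemma multiple_pi_cases [consumes 1, case_names multiple between]:
  fixes d :: real
  assumes "0 \<le> d"
  obtains (multiple) k :: nat where "d = real k * pi"
    | (between) k :: nat where "real k * pi < d" "d < real (k + 1) * pi"
proof -
  define k where "k = nat \<lfloor>d / pi\<rfloor>"
  have "real k = of_int \<lfloor>d / pi\<rfloor>" using assms by (simp add: k_def)
  then have k: "real k * pi \<le> d" "d < real (k + 1) * pi"
    using floor_divide_pi_bounds[of d] by (simp_all add: add.commute)
  show thesis
  proof (cases "d = real k * pi")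
    case True
    then show thesis by (rule multiple)
  next
    case False
    then show thesis using k by (intro between[of k]) simp_all
  qed
qed

lemma SLtilde_strict_mono:
  assumes "g \<in> SLtilde"
  shows "strict_mono g"
proof
  fix x y :: real
  assume "x < y"
  then have "0 \<le> y - x" by simp
  then show "g x < g y"
  proof (cases rule: multiple_pi_cases)
    case (multiple k)
    with \<open>x < y\<close> have "k > 0" by (cases k) auto
    moreover have "y = x + real k * pi" using multiple by simp
    ultimately show ?thesis using SLtilde_shift_nat[OF assms, of x k] by simp
  next
    case (between k)
    then have "g x + real k * pi < g y" using SLtilde_between[OF assms, of x k y] by simp
    moreover have "real k * pi \<ge> 0" by simp
    ultimately show ?thesis by linarith
  qed
qed

text \<open>Lifts with a fixed point \<open>x\<^sub>0\<close> fix all of \<open>x\<^sub>0 + \<pi>\<int>\<close>, and each interval between two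
  consecutive ones is mapped into itself.\<close>
lemma SLtilde_displacement_less_pi:
  assumes g: "g \<in> SLtilde" and fx: "g x\<^sub>0 = x\<^sub>0"
  shows "\<bar>g s - s\<bar> < pi"
proof -
  define p where "p = x\<^sub>0 + of_int \<lfloor>(s - x\<^sub>0) / pi\<rfloor> * pi"
  have p: "p \<le> s" "s < p + pi"
    using floor_divide_pi_bounds[of "s - x\<^sub>0"] by (simp_all add: p_def algebra_simps)
  have "g p = p" using SLtilde_shift_int[OF g] fx by (simp add: p_def)
  then show ?thesis
    using p SLtilde_less_within_pi[OF g, of p s] by (cases "s = p") auto
qed

lemma SLtilde_comp_Etr:
  assumes "g \<in> SLtilde"
  shows "(g \<circ> Etr (real n * pi)) x = g x + real n * pi"
  using SLtilde_shift_nat[OF assms] by (simp add: Etr_def)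

section \<open>Canonical lifts\<close>

lemma lift_of_sgn_displacement:
  assumes "lift_of M g" "\<bar>g t - t\<bar> < pi"
  shows "sgn (g t - t) = sgn (fix_defect M t)"
  using lift_of_sin_displacement[OF assms(1), of t] lift_of_polar(1)[OF assms(1), of t]
    sgn_sin[OF assms(2)]
  by simp

lemma eigenvalue_pos_if_trace_pos:
  fixes M :: mat2
  assumes "det M = 1" "0 < trace M" "M *v v = c *\<^sub>R v" "v \<noteq> 0"
  shows "0 < c"
proof -
  define p where "p = c\<^sup>2 - trace M * c + 1"
  have e1: "(M$1$1 - c) * v$1 + M$1$2 * v$2 = 0" and e2: "M$2$1 * v$1 + (M$2$2 - c) * v$2 = 0"
    using arg_cong[OF assms(3), of "\<lambda>w. w $ 1"] arg_cong[OF assms(3), of "\<lambda>w. w $ 2"]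
    by (simp_all add: matrix_vector_mult_2 algebra_simps)
  \<comment> \<open>Cayley--Hamilton: \<open>p\<close> is the characteristic polynomial of \<open>M\<close> at \<open>c\<close>.\<close>
  have "p * v$1 = (M$2$2 - c) * ((M$1$1 - c) * v$1 + M$1$2 * v$2)
      - M$1$2 * (M$2$1 * v$1 + (M$2$2 - c) * v$2)"
    "p * v$2 = (M$1$1 - c) * (M$2$1 * v$1 + (M$2$2 - c) * v$2)
      - M$2$1 * ((M$1$1 - c) * v$1 + M$1$2 * v$2)"
    using assms(1) by (simp_all add: p_def det_2 trace_def sum_2 power2_eq_square algebra_simps)
  then have "p * v$1 = 0" "p * v$2 = 0" using e1 e2 by simp_all
  then have "p = 0" using assms(4) by (auto simp: vec_eq_iff forall_2)
  then have "trace M * c = c\<^sup>2 + 1" by (simp add: p_def)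
  then have "trace M * c > 0" by (metis add_pos_nonneg zero_less_one zero_le_power2 add.commute)
  then show ?thesis using assms(2) by (simp add: zero_less_mult_iff)
qed

text \<open>A canonical lift fixes a point, where \<open>M\<close> or \<open>-M\<close> must have a positive eigenvalue; when
  \<open>trace M > 0\<close> both eigenvalues of \<open>M\<close> are positive, which rules out \<open>-M\<close>.\<close>
lemma canonical_lift_imp_lift_of:
  assumes cl: "canonical_lift M g" and tr: "0 < trace M"
  shows "lift_of M g"
proof (rule ccontr)
  assume "\<not> lift_of M g"
  then have L: "lift_of (- M) g" using cl by (simp add: canonical_lift_def)
  obtain x where fx: "g x = x" using cl by (auto simp: canonical_lift_def)
  have "det M = 1" using L by (simp add: lift_of_def det_2)
  moreover have "(- M) *v pibar x = - (M *v pibar x)"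
    by (simp add: vec_eq_iff forall_2 matrix_vector_mult_2)
  then have "- (M *v pibar x) = norm (M *v pibar x) *\<^sub>R pibar x"
    using lift_of_polar(2)[OF L, of x] fx by simp
  then have "M *v pibar x = (- norm (M *v pibar x)) *\<^sub>R pibar x"
    by (simp add: minus_equation_iff[of "M *v pibar x"])
  moreover have "pibar x \<noteq> 0" by (metis norm_pibar norm_zero zero_neq_one)
  ultimately have "0 < - norm (M *v pibar x)" by (rule eigenvalue_pos_if_trace_pos[OF _ tr])
  then show False by simp
qed

lemma canonical_lift_displacement_less_pi:
  assumes "canonical_lift M g"
  shows "\<bar>g x - x\<bar> < pi"
  using assms SLtilde_displacement_less_pi by (auto simp: canonical_lift_def)

lemma canonical_lift_sgn_displacement:
  assumes "canonical_lift M g" "0 < trace M"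
  shows "sgn (g x - x) = sgn (fix_defect M x)"
  using canonical_lift_imp_lift_of[OF assms] canonical_lift_displacement_less_pi[OF assms(1)]
  by (rule lift_of_sgn_displacement)

lemma canonical_lift_shift_gt:
  assumes "canonical_lift M g" "1 \<le> n"
  shows "x < (g \<circ> Etr (real n * pi)) x"
proof -
  have g: "g \<in> SLtilde" using assms(1) by (simp add: canonical_lift_def)
  have "\<bar>g x - x\<bar> < pi" using assms(1) by (rule canonical_lift_displacement_less_pi)
  moreover have "pi \<le> real n * pi" using assms(2) by simp
  ultimately show ?thesis unfolding SLtilde_comp_Etr[OF g] abs_less_iff by linarith
qed

section \<open>Winding numbers\<close>

lemma winding_add_multiple_pi: "winding a (a + real k * pi) = real k"
proof -
  have "(THE j::nat. a + real k * pi = a + real j * pi) = k" by (rule the_equality) auto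
  then show ?thesis by (auto simp: winding_def)
qed

lemma winding_between:
  assumes "a + real k * pi < b" "b < a + real (k + 1) * pi"
  shows "winding a b = real k + 1/2"
proof -
  have k_unique: "j = k" if "real k * pi < real (j + 1) * pi" "real j * pi < real (k + 1) * pi"
    for j :: nat
    using that by simp
  have "\<nexists>j::nat. b = a + real j * pi"
    using assms k_unique by force
  moreover have "(THE j::nat. a + real j * pi < b \<and> b < a + real (j + 1) * pi) = k"
  proof (rule the_equality)
    fix j :: nat
    assume "a + real j * pi < b \<and> b < a + real (j + 1) * pi"
    with assms show "j = k" by (intro k_unique) linarith+
  qed (use assms in simp)
  ultimately show ?thesis by (simp add: winding_def)
qed

lemma half_odd_notin_Ints: "real k + 1/2 \<notin> \<int>"
proof
  assume "real k + 1/2 \<in> \<int>"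
  then obtain z where "real k + 1/2 = of_int z" by (auto elim: Ints_cases)
  then have "of_int (2 * z) = (of_int (2 * int k + 1) :: real)" by simp
  then have "2 * z = 2 * int k + 1" by (simp only: of_int_eq_iff)
  then show False by presburger
qed

lemma winding_in_Ints_iff:
  assumes "a < b"
  shows "winding a b \<in> \<int> \<longleftrightarrow> (\<exists>k::nat. b = a + real k * pi)"
proof -
  have "0 \<le> b - a" using assms by simp
  then show ?thesis
  proof (cases rule: multiple_pi_cases)
    case (multiple k)
    then have "b = a + real k * pi" by simp
    then show ?thesis using winding_add_multiple_pi[of a k] by auto
  next
    case (between k)
    then have "winding a b = real k + 1/2" by (intro winding_between) auto
    then show ?thesis using half_odd_notin_Ints[of k] winding_add_multiple_pi[of a] by (metis Ints_of_nat)
  qed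
qed

lemma winding_eq_of_nat_iff:
  assumes "a < b"
  shows "winding a b = real n \<longleftrightarrow> b = a + real n * pi"
proof
  assume w: "winding a b = real n"
  then obtain k :: nat where "b = a + real k * pi"
    using winding_in_Ints_iff[OF assms] by (metis Ints_of_nat)
  then show "b = a + real n * pi" using w winding_add_multiple_pi[of a k] by simp
qed (simp add: winding_add_multiple_pi)

lemma winding_diff: "winding a b = winding 0 (b - a)"
  unfolding winding_def by (simp add: algebra_simps)

lemma winding_near_multiple_pi:
  assumes "1 \<le> n" "\<bar>d\<bar> < pi"
  shows "winding x (x + real n * pi + d) = real n + sgn d / 2"
proof (cases d "0 :: real" rule: linorder_cases)
  case less
  then have "winding x (x + real n * pi + d) = real (n - 1) + 1/2"
    using assms by (intro winding_between) (auto simp: of_nat_diff algebra_simps)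
  then show ?thesis using less assms(1) by (simp add: of_nat_diff)
next
  case equal
  then show ?thesis by (simp add: winding_add_multiple_pi)
next
  case greater
  then show ?thesis using assms by (subst winding_between[of _ n]) (auto simp: algebra_simps)
qed

lemma nat_multiple_pi_iff_sin_eq_0:
  fixes d :: real
  assumes "0 < d"
  shows "(\<exists>k::nat. d = real k * pi) \<longleftrightarrow> sin d = 0"
proof
  assume "sin d = 0"
  then obtain i :: int where i: "d = of_int i * pi" using sin_zero_iff_int2 by blast
  then have "i > 0" using assms by (simp add: zero_less_mult_iff)
  then show "\<exists>k::nat. d = real k * pi" using i by (intro exI[of _ "nat i"]) simp
qed auto

lemma winding_in_Ints_iff_sin:
  assumes "a < b"
  shows "winding a b \<in> \<int> \<longleftrightarrow> sin (b - a) = 0"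
  using winding_in_Ints_iff[OF assms] nat_multiple_pi_iff_sin_eq_0[of "b - a"] assms
  by (simp add: algebra_simps)

lemma winding_SLtilde_invariant:
  assumes h: "h \<in> SLtilde" and "x < y"
  shows "winding (h x) (h y) = winding x y"
proof -
  have "0 \<le> y - x" using \<open>x < y\<close> by simp
  then show ?thesis
  proof (cases rule: multiple_pi_cases)
    case (multiple k)
    then have "y = x + real k * pi" by simp
    then show ?thesis using SLtilde_shift_nat[OF h] by (simp add: winding_add_multiple_pi)
  next
    case (between k)
    then have "x + real k * pi < y" "y < x + real (k + 1) * pi" by simp_all
    then show ?thesis using SLtilde_between[OF h] by (simp add: winding_between)
  qed
qed

lemma winding_in_Ints_iff_rp_fixed:
  assumes "lift_of M f" "a < f a"
  shows "winding a (f a) \<in> \<int> \<longleftrightarrow> rp_fixed M a"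
  using winding_in_Ints_iff_sin[OF assms(2)] lift_of_sin_displacement[OF assms(1), of a]
    lift_of_polar(1)[OF assms(1), of a]
  by (simp add: rp_fixed_iff_fix_defect)

section \<open>Conjugation\<close>

lemma conjugate_semiconj:
  assumes "conjugate f G"
  shows "\<exists>h\<in>SLtilde. (\<forall>x. f (h x) = h (G x)) \<and> surj h"
proof -
  obtain h where h: "h \<in> SLtilde" "f = h \<circ> G \<circ> inv h" using assms unfolding conjugate_def by blast
  then have "bij h" by (simp add: SLtilde_def diffeo_def)
  then have "\<forall>x. f (h x) = h (G x)" "surj h" using h(2) by (simp_all add: bij_is_inj bij_is_surj)
  then show ?thesis using h(1) by blast
qed

lemma conjugate_winding_range:
  assumes "conjugate f G" "\<And>x. x < G x"
  shows "range (\<lambda>a. winding a (f a)) = range (\<lambda>x. winding x (G x))"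
proof -
  obtain h where h: "h \<in> SLtilde" "\<forall>x. f (h x) = h (G x)" "surj h"
    using conjugate_semiconj[OF assms(1)] by blast
  have "range (\<lambda>a. winding a (f a)) = (\<lambda>a. winding a (f a)) ` range h"
    using h(3) by simp
  also have "\<dots> = range (\<lambda>x. winding (h x) (h (G x)))"
    unfolding image_image h(2)[rule_format] ..
  also have "\<dots> = range (\<lambda>x. winding x (G x))"
    using winding_SLtilde_invariant[OF h(1) assms(2)] by simp
  finally show ?thesis .
qed

lemma conjugate_less:
  assumes "conjugate f G" "\<And>x. x < G x"
  shows "a < f a"
proof -
  obtain h where h: "h \<in> SLtilde" "\<forall>x. f (h x) = h (G x)" "surj h"
    using conjugate_semiconj[OF assms(1)] by blast
  obtain x where "a = h x" using surjD[OF h(3)] by blast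
  then show ?thesis
    using h(2) strict_monoD[OF SLtilde_strict_mono[OF h(1)] assms(2)] by auto
qed

lemma winding_conjugate_translation:
  assumes "0 < \<alpha>" "conjugate f (Etr \<alpha>)"
  shows "(\<forall>n::nat. winding a (f a) = real n \<longleftrightarrow> \<alpha> = real n * pi) \<and>
    (\<forall>n::nat. real n * pi < \<alpha> \<and> \<alpha> < real (n + 1) * pi \<longrightarrow> winding a (f a) = real n + 1/2)"
proof -
  have "range (\<lambda>a. winding a (f a)) = range (\<lambda>x. winding x (x + \<alpha>))"
    using conjugate_winding_range[OF assms(2)] assms(1) by (simp add: Etr_def)
  also have "\<dots> = {winding 0 \<alpha>}" by (subst winding_diff) simp
  finally have "winding a (f a) = winding 0 \<alpha>" by blast
  then show ?thesis using assms(1) winding_eq_of_nat_iff[of 0 \<alpha>] winding_between[of 0 _ \<alpha>] by simp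
qed

lemma winding_range_canonical_lift:
  assumes cl: "canonical_lift M g" and tr: "0 < trace M"
    and conj: "conjugate f (g \<circ> Etr (real n * pi))" and n: "1 \<le> n"
  shows "range (\<lambda>a. winding a (f a)) = (\<lambda>s. real n + s / 2) ` range (\<lambda>x. sgn (fix_defect M x))"
proof -
  have g: "g \<in> SLtilde" using cl by (simp add: canonical_lift_def)
  have "winding x ((g \<circ> Etr (real n * pi)) x) = real n + sgn (fix_defect M x) / 2" for x
    using winding_near_multiple_pi[OF n canonical_lift_displacement_less_pi[OF cl], of x x]
    unfolding SLtilde_comp_Etr[OF g]
    by (simp add: canonical_lift_sgn_displacement[OF cl tr] algebra_simps)
  then have "range (\<lambda>a. winding a (f a)) = range (\<lambda>x. real n + sgn (fix_defect M x) / 2)"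
    using conjugate_winding_range[OF conj canonical_lift_shift_gt[OF cl n]] by simp
  then show ?thesis by (simp add: image_image)
qed

lemma winding_conjugate_in_Ints_iff_rp_fixed:
  assumes "1 \<le> n" "canonical_lift N g" "conjugate f (g \<circ> Etr (real n * pi))" "lift_of M f"
  shows "winding a (f a) \<in> \<int> \<longleftrightarrow> rp_fixed M a"
  using winding_in_Ints_iff_rp_fixed[OF assms(4)]
    conjugate_less[OF assms(3) canonical_lift_shift_gt[OF assms(2,1)]] .

section \<open>The parabolic and hyperbolic models\<close>

lemma fix_defect_Pplus: "fix_defect Pplus t = - (sin t)\<^sup>2"
  by (simp add: fix_defect_def Pplus_def matrix_vector_mult_2 algebra_simps power2_eq_square)

lemma fix_defect_Pminus: "fix_defect Pminus t = (sin t)\<^sup>2"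
  by (simp add: fix_defect_def Pminus_def matrix_vector_mult_2 algebra_simps power2_eq_square)

lemma fix_defect_Hmat: "fix_defect (Hmat l) t = (1 / l - l) * (cos t * sin t)"
  by (simp add: fix_defect_def Hmat_def matrix_vector_mult_2 algebra_simps)

lemma trace_Pplus: "trace Pplus = 2"
  by (simp add: trace_def sum_2 Pplus_def)

lemma trace_Pminus: "trace Pminus = 2"
  by (simp add: trace_def sum_2 Pminus_def)

lemma trace_Hmat: "trace (Hmat l) = l + 1 / l"
  by (simp add: trace_def sum_2 Hmat_def)

lemma range_sgn_fix_defect_Pplus: "range (\<lambda>x. sgn (fix_defect Pplus x)) = {-1, 0}"
proof -
  have "sgn (fix_defect Pplus x) \<in> {-1, 0}" for x by (simp add: fix_defect_Pplus sgn_real_def)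
  moreover have "sgn (fix_defect Pplus 0) = 0" "sgn (fix_defect Pplus (pi/2)) = -1"
    by (simp_all add: fix_defect_Pplus)
  ultimately show ?thesis by (auto intro: range_eqI[OF sym])
qed

lemma range_sgn_fix_defect_Pminus: "range (\<lambda>x. sgn (fix_defect Pminus x)) = {0, 1}"
proof -
  have "sgn (fix_defect Pminus x) \<in> {0, 1}" for x by (simp add: fix_defect_Pminus sgn_real_def)
  moreover have "sgn (fix_defect Pminus 0) = 0" "sgn (fix_defect Pminus (pi/2)) = 1"
    by (simp_all add: fix_defect_Pminus)
  ultimately show ?thesis by (auto intro: range_eqI[OF sym])
qed

lemma range_sgn_fix_defect_Hmat:
  assumes "1 < l"
  shows "range (\<lambda>x. sgn (fix_defect (Hmat l) x)) = {-1, 0, 1}"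
proof -
  have "1 / l < 1" using assms by simp
  then have neg: "1 / l - l < 0" using assms by linarith
  have "sgn (fix_defect (Hmat l) x) \<in> {-1, 0, 1}" for x by (simp add: sgn_real_def)
  moreover have "sgn (fix_defect (Hmat l) 0) = 0" by (simp add: fix_defect_Hmat)
  moreover have "sgn (fix_defect (Hmat l) (pi/4)) = -1" "sgn (fix_defect (Hmat l) (- (pi/4))) = 1"
    using neg by (simp_all add: fix_defect_Hmat cos_45 sin_45 mult_neg_pos mult_neg_neg)
  ultimately show ?thesis by (auto intro: range_eqI[OF sym])
qed

lemma bounds_attained_if_range_eq:
  fixes F :: "'a \<Rightarrow> real"
  assumes "range F = S" "S \<subseteq> {lo..hi}" "lo \<in> S" "hi \<in> S"
  shows "(\<forall>x. lo \<le> F x \<and> F x \<le> hi) \<and> (\<exists>x. F x = lo) \<and> (\<exists>x. F x = hi)"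
  using assms by (metis atLeastAtMost_iff imageE rangeI subsetD)

lemma winding_conjugate_Pplus:
  assumes "1 \<le> n" "canonical_lift Pplus g" "conjugate f (g \<circ> Etr (real n * pi))"
  shows "(\<forall>a. real n - 1/2 \<le> winding a (f a) \<and> winding a (f a) \<le> real n) \<and>
    (\<exists>a. winding a (f a) = real n - 1/2) \<and> (\<exists>a. winding a (f a) = real n)"
proof -
  have "range (\<lambda>a. winding a (f a)) = {real n - 1/2, real n}"
    using winding_range_canonical_lift[OF assms(2) _ assms(3,1)]
    by (simp add: trace_Pplus range_sgn_fix_defect_Pplus)
  then show ?thesis by (rule bounds_attained_if_range_eq) auto
qed

lemma winding_conjugate_Pminus:
  assumes "1 \<le> n" "canonical_lift Pminus g" "conjugate f (g \<circ> Etr (real n * pi))"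
  shows "(\<forall>a. real n \<le> winding a (f a) \<and> winding a (f a) \<le> real n + 1/2) \<and>
    (\<exists>a. winding a (f a) = real n) \<and> (\<exists>a. winding a (f a) = real n + 1/2)"
proof -
  have "range (\<lambda>a. winding a (f a)) = {real n, real n + 1/2}"
    using winding_range_canonical_lift[OF assms(2) _ assms(3,1)]
    by (simp add: trace_Pminus range_sgn_fix_defect_Pminus)
  then show ?thesis by (rule bounds_attained_if_range_eq) auto
qed

lemma winding_conjugate_Hmat:
  assumes "1 < l" "1 \<le> n" "canonical_lift (Hmat l) g" "conjugate f (g \<circ> Etr (real n * pi))"
  shows "(\<forall>a. real n - 1/2 \<le> winding a (f a) \<and> winding a (f a) \<le> real n + 1/2) \<and>
    (\<exists>a. winding a (f a) = real n - 1/2) \<and> (\<exists>a. winding a (f a) = real n + 1/2)"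
proof -
  have "0 < trace (Hmat l)" using assms(1) by (simp add: trace_Hmat add_pos_pos)
  from winding_range_canonical_lift[OF assms(3) this assms(4,2)]
  have "range (\<lambda>a. winding a (f a)) = {real n - 1/2, real n, real n + 1/2}"
    by (simp add: range_sgn_fix_defect_Hmat[OF assms(1)])
  then show ?thesis by (rule bounds_attained_if_range_eq) auto
qed

theorem mainTheorem13:
  fixes f :: "real \<Rightarrow> real"
  assumes "f \<in> SLtilde"
  shows
   "(\<forall>\<alpha>>0. conjugate f (Etr \<alpha>) \<longrightarrow>
        (\<forall>a. (\<forall>n::nat. winding a (f a) = real n \<longleftrightarrow> \<alpha> = real n * pi) \<and>
             (\<forall>n::nat. real n * pi < \<alpha> \<and> \<alpha> < real (n + 1) * pi \<longrightarrow>
                winding a (f a) = real n + 1/2)))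
    \<and> (\<forall>n::nat. n \<ge> 1 \<longrightarrow>
        (\<exists>g. canonical_lift Pplus g \<and> conjugate f (g \<circ> Etr (real n * pi))) \<longrightarrow>
          (\<forall>a. real n - 1/2 \<le> winding a (f a) \<and> winding a (f a) \<le> real n) \<and>
          (\<exists>a. winding a (f a) = real n - 1/2) \<and> (\<exists>a. winding a (f a) = real n))
    \<and> (\<forall>n::nat. n \<ge> 1 \<longrightarrow>
        (\<exists>g. canonical_lift Pminus g \<and> conjugate f (g \<circ> Etr (real n * pi))) \<longrightarrow>
          (\<forall>a. real n \<le> winding a (f a) \<and> winding a (f a) \<le> real n + 1/2) \<and>
          (\<exists>a. winding a (f a) = real n) \<and> (\<exists>a. winding a (f a) = real n + 1/2))
    \<and> (\<forall>l>1. \<forall>n::nat. n \<ge> 1 \<longrightarrow>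
        (\<exists>g. canonical_lift (Hmat l) g \<and> conjugate f (g \<circ> Etr (real n * pi))) \<longrightarrow>
          (\<forall>a. real n - 1/2 \<le> winding a (f a) \<and> winding a (f a) \<le> real n + 1/2) \<and>
          (\<exists>a. winding a (f a) = real n - 1/2) \<and> (\<exists>a. winding a (f a) = real n + 1/2))
    \<and> ((\<exists>n::nat. n \<ge> 1 \<and>
          ((\<exists>g. canonical_lift Pplus g \<and> conjugate f (g \<circ> Etr (real n * pi))) \<or>
           (\<exists>g. canonical_lift Pminus g \<and> conjugate f (g \<circ> Etr (real n * pi))) \<or>
           (\<exists>l>1. \<exists>g. canonical_lift (Hmat l) g \<and> conjugate f (g \<circ> Etr (real n * pi))))) \<longrightarrow>
        (\<forall>a M. lift_of M f \<longrightarrow> (winding a (f a) \<in> \<int> \<longleftrightarrow> rp_fixed M a)))"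
  apply (intro conjI)
  subgoal using winding_conjugate_translation by blast
  subgoal using winding_conjugate_Pplus by blast
  subgoal using winding_conjugate_Pminus by blast
  subgoal using winding_conjugate_Hmat by blast
  subgoal using winding_conjugate_in_Ints_iff_rp_fixed by blast
  done

end
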